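(* Assume Assumption (S). Let $U$ be a sufficiently smooth solution of $U_t+\beta U_x=0$ on $\Omega$ with periodic boundary conditions, $U^n=U(\cdot,n\tau)$, and define reference functions $U^{n,0}=U^n$, $U^{n,\ell+1}=\sum_{0\le\kappa\le\ell}(c_{\ell\kappa}U^{n,\kappa}-\tau d_{\ell\kappa}\beta U^{n,\kappa}_x)$ for $\ell=0,\dots,s-2$, and $U^{n,s}=U^{n+1}$. Define $\rho^{n,\ell+1}=0$ for $\ell<s-1$ and $\rho^{n,s}=\frac1\tau\big(U^{n+1}-\sum_{0\le\kappa\le s-1}(c_{s-1,\kappa}U^{n,\kappa}-\tau d_{s-1,\kappa}\beta U^{n,\kappa}_x)\big)$. Then for all $\omega\in\mathbb V^k$ and $\ell=0,\dots,s-1$, $$(U^{n,\ell+1},M^*\omega)=\sum_{0\le\kappa\le\ell}\big(c_{\ell\kappa}(U^{n,\kappa},M^*\omega)+\tau d_{\ell\kappa}\mathcal H^*(U^{n,\kappa},\omega)\big)+\tau(\rho^{n,\ell+1},M^*\omega).$$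
   Context: Let $\Omega=[a,b]$ be partitioned into finitely many cells $I_i=[x_{i-\frac12},x_{i+\frac12}]$ with sizes $h_i$; indices periodic. $(\cdot,\cdot)$: $L^2(\Omega)$ inner product; $(\cdot,\cdot)_{I_i}$: $L^2(I_i)$ inner product. $\mathbb V^k=\{v\in L^2(\Omega): v|_{I_i}\in\mathbb P^k(I_i)\ \forall i\}$. Each $I_i$ has subdivision points $x_{i-\frac12}=x_{i,0}<x_{i,1}<\dots<x_{i,k}<x_{i,k+1}=x_{i+\frac12}$, control volumes $I_{i,j}=[x_{i,j},x_{i,j+1}]$; $\mathbb V^{k,*}$ = functions constant on each $I_{i,j}$. Quadrature on $I_i$: $Q_i^k(v)=\sum_{j=0}^{k+1}A_{i,j}v(x_{i,j})$ (applied to restrictions to $I_i$, endpoint values from inside), error $R_i^k(v)=\int_{I_i}v\,dx-Q_i^k(v)$, exact on $\mathbb P^{k-1}(I_i)$. $M^*:\mathbb V^k\to\mathbb V^{k,*}$: for $v=\omega|_{I_i}$, $(M^*\omega)|_{I_{i,0}}=v(x_{i-\frac12})+A_{i,0}v'(x_{i-\frac12})$, $(M^*\omega)|_{I_{i,j}}-(M^*\omega)|_{I_{i,j-1}}=A_{i,j}v'(x_{i,j})$, $j=1,\dots,k$. $L_{i,\ell}$: shifted Legendre polynomial of degree $\ell$ on $I_i$, $L_{i,\ell}(x_{i+\frac12})=1$, $(L_{i,\ell},L_{i,m})_{I_i}=\delta_{\ell m}h_i/(2\ell+1)$. Assumption (S): $k\ge1$ and for every $i$, $R_i^k$ vanishes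 on $\mathbb P^{2k-1}(I_i)$ and $\frac{h_i}{2k-1}-Q_i^k(L_{i,k+1}L_{i,k-1})>0$. Jumps $[\![v]\!]_{i+\frac12}=v(x_{i+\frac12}^+)-v(x_{i+\frac12}^-)$. For $\omega\in\mathbb V^k$ and $v$ piecewise smooth (in particular continuous $v$): $\mathcal H^*(v,\omega)=\beta\big(\sum_iQ_i^k(v\omega_x)+\sum_iv(x_{i+\frac12}^-)[\![\omega]\!]_{i+\frac12}-\sum_iA_{i,0}\omega_x(x_{i-\frac12}^+)[\![v]\!]_{i-\frac12}\big)$, $\beta>0$ constant. $c_{\ell\kappa},d_{\ell\kappa}$ ($0\le\kappa\le\ell\le s-1$, $\sum_\kappa c_{\ell\kappa}=1$) are explicit $s$-stage Runge–Kutta coefficients, $\tau>0$ the time step. *)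

theory Defs
  imports "HOL-Analysis.Analysis" "HOL-Computational_Algebra.Polynomial"
begin

text \<open>Mesh: N cells I_i = [xb i, xb (Suc i)], i < N, periodic indices (mod N).
  Subdivision points xs i j, j = 0..k+1, with xs i 0 = xb i and xs i (k+1) = xb (Suc i).  A function in V^k is given by its N cell polynomials
  omega i (degree at most k); restriction to I_i is poly (omega i).\<close>

definition cellsize :: "(nat \<Rightarrow> real) \<Rightarrow> nat \<Rightarrow> real" where
  "cellsize xb i = xb (Suc i) - xb i"

definition quadQ :: "nat \<Rightarrow> (nat \<Rightarrow> nat \<Rightarrow> real) \<Rightarrow> (nat \<Rightarrow> nat \<Rightarrow> real) \<Rightarrow> nat \<Rightarrow> (real \<Rightarrow> real) \<Rightarrow> real" where
  "quadQ k xs A i f = (\<Sum>j\<le>Suc k. A i j * f (xs i j))"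

definition shiftedLegendre :: "(nat \<Rightarrow> real) \<Rightarrow> nat \<Rightarrow> nat \<Rightarrow> real \<Rightarrow> real" where
  "shiftedLegendre xb i l x =
     (\<Sum>m\<le>l. real (l choose m) * real ((l + m) choose m) * ((x - xb (Suc i)) / cellsize xb i) ^ m)"

definition assumptionS :: "nat \<Rightarrow> nat \<Rightarrow> (nat \<Rightarrow> real) \<Rightarrow> (nat \<Rightarrow> nat \<Rightarrow> real) \<Rightarrow> (nat \<Rightarrow> nat \<Rightarrow> real) \<Rightarrow> bool" where
  "assumptionS N k xb xs A \<longleftrightarrow> k \<ge> 1 \<and>
     (\<forall>i<N. (\<forall>p :: real poly. degree p \<le> 2*k - 1 \<longrightarrow>
                integral {xb i..xb (Suc i)} (poly p) = quadQ k xs A i (poly p))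
          \<and> cellsize xb i / (2 * real k - 1)
              - quadQ k xs A i (\<lambda>x. shiftedLegendre xb i (k+1) x * shiftedLegendre xb i (k-1) x) > 0)"

text \<open>M^* omega, a piecewise constant function: value on I_{i,j}.\<close>
fun Mstar :: "(nat \<Rightarrow> real) \<Rightarrow> (nat \<Rightarrow> nat \<Rightarrow> real) \<Rightarrow> (nat \<Rightarrow> nat \<Rightarrow> real) \<Rightarrow> (nat \<Rightarrow> real poly) \<Rightarrow> nat \<Rightarrow> nat \<Rightarrow> real" where
  "Mstar xb xs A \<omega> i 0 = poly (\<omega> i) (xb i) + A i 0 * poly (pderiv (\<omega> i)) (xb i)"
| "Mstar xb xs A \<omega> i (Suc j) = Mstar xb xs A \<omega> i j + A i (Suc j) * poly (pderiv (\<omega> i)) (xs i (Suc j))"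

text \<open>L^2(Omega) inner product (v, w) of a function v with a piecewise constant
  function w in V^{k,*} given by its values w i j on I_{i,j}.\<close>
definition ipStar :: "nat \<Rightarrow> nat \<Rightarrow> (nat \<Rightarrow> nat \<Rightarrow> real) \<Rightarrow> (real \<Rightarrow> real) \<Rightarrow> (nat \<Rightarrow> nat \<Rightarrow> real) \<Rightarrow> real" where
  "ipStar N k xs v w = (\<Sum>i<N. \<Sum>j\<le>k. integral {xs i j..xs i (Suc j)} (\<lambda>x. v x * w i j))"

text \<open>The bilinear form H^*(v, omega) for continuous v (one-sided traces of v equal v);
  the cell to the left of x_{i-1/2} is (i + N - 1) mod N, to the right of x_{i+1/2} is Suc i mod N.\<close>
definition Hstar :: "real \<Rightarrow> nat \<Rightarrow> nat \<Rightarrow> (nat \<Rightarrow> real) \<Rightarrow> (nat \<Rightarrow> nat \<Rightarrow> real) \<Rightarrow> (nat \<Rightarrow> nat \<Rightarrow> real)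
     \<Rightarrow> (real \<Rightarrow> real) \<Rightarrow> (nat \<Rightarrow> real poly) \<Rightarrow> real" where
  "Hstar \<beta> N k xb xs A v \<omega> = \<beta> *
     ((\<Sum>i<N. quadQ k xs A i (\<lambda>x. v x * poly (pderiv (\<omega> i)) x))
      + (\<Sum>i<N. v (xb (Suc i)) *
            (poly (\<omega> (Suc i mod N)) (xb (Suc i mod N)) - poly (\<omega> i) (xb (Suc i))))
      - (\<Sum>i<N. A i 0 * poly (pderiv (\<omega> i)) (xb i) *
            (v (xb i) - v (xb (Suc ((i + N - 1) mod N))))))"

fun Uref :: "(nat \<Rightarrow> nat \<Rightarrow> real) \<Rightarrow> (nat \<Rightarrow> nat \<Rightarrow> real) \<Rightarrow> real \<Rightarrow> real \<Rightarrow> nat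
     \<Rightarrow> (real \<Rightarrow> real \<Rightarrow> real) \<Rightarrow> nat \<Rightarrow> nat \<Rightarrow> real \<Rightarrow> real" where
  "Uref c d \<beta> \<tau> s U n 0 = (\<lambda>x. U x (real n * \<tau>))"
| "Uref c d \<beta> \<tau> s U n (Suc l) =
     (if Suc l = s then (\<lambda>x. U x (real (Suc n) * \<tau>))
      else (\<lambda>x. \<Sum>\<kappa>\<le>l. c l \<kappa> * Uref c d \<beta> \<tau> s U n \<kappa> x
                        - \<tau> * d l \<kappa> * \<beta> * deriv (Uref c d \<beta> \<tau> s U n \<kappa>) x))"

fun rho :: "(nat \<Rightarrow> nat \<Rightarrow> real) \<Rightarrow> (nat \<Rightarrow> nat \<Rightarrow> real) \<Rightarrow> real \<Rightarrow> real \<Rightarrow> nat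
     \<Rightarrow> (real \<Rightarrow> real \<Rightarrow> real) \<Rightarrow> nat \<Rightarrow> nat \<Rightarrow> real \<Rightarrow> real" where
  "rho c d \<beta> \<tau> s U n 0 = (\<lambda>x. 0)"
| "rho c d \<beta> \<tau> s U n (Suc l) =
     (if Suc l = s then
        (\<lambda>x. (1 / \<tau>) * (U x (real (Suc n) * \<tau>)
              - (\<Sum>\<kappa>\<le>l. c l \<kappa> * Uref c d \<beta> \<tau> s U n \<kappa> x
                        - \<tau> * d l \<kappa> * \<beta> * deriv (Uref c d \<beta> \<tau> s U n \<kappa>) x)))
      else (\<lambda>x. 0))"

end

theory Submission
  imports Defs
begin

text \<open>The content is the identity H*(v, \<omega>) = -\<beta> (v_x, M*\<omega>) for every smooth periodic v.
  On each control volume M*\<omega> is constant, so on a cell (v_x, M*\<omega>) is a sum of increments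
  of v weighted by these constants. Summation by parts turns it into boundary values minus
  Q_i(v \<omega>_x): the increments of M*\<omega> are the quadrature weights times \<omega>_x, and the quadrature
  integrates \<omega>_x, of degree k - 1, exactly. Summed over the cells, the boundary values give the
  flux terms of H* by periodicity, while the jump terms of the continuous v vanish. All reference
  stages are smooth and periodic, and \<tau> \<rho>^{n,l+1} is the difference between U^{n,l+1} and the
  Runge-Kutta combination of the earlier stages, so the proposition follows by linearity.\<close>

definition smooth :: "(real \<Rightarrow> real) \<Rightarrow> bool" where
  "smooth f \<longleftrightarrow> (\<forall>m x. (deriv ^^ m) f differentiable (at x))"

lemma smooth_differentiable: "smooth f \<Longrightarrow> f differentiable (at x)"
  unfolding smooth_def by (metis funpow_0)

lemma smooth_has_derivative: "smooth f \<Longrightarrow> (f has_real_derivative deriv f x) (at x)"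
  by (simp add: DERIV_deriv_iff_real_differentiable smooth_differentiable)

lemma smooth_continuous_on: "smooth f \<Longrightarrow> continuous_on S f"
  by (meson continuous_at_imp_continuous_on differentiable_imp_continuous_within
      smooth_differentiable)

lemma smooth_deriv: "smooth f \<Longrightarrow> smooth (deriv f)"
  unfolding smooth_def by (metis comp_apply funpow_Suc_right)

lemma higher_deriv_linear:
  assumes "smooth f" "smooth g"
  shows "(deriv ^^ m) (\<lambda>x. a * f x + b * g x) = (\<lambda>x. a * (deriv ^^ m) f x + b * (deriv ^^ m) g x)"
  using assms
proof (induction m arbitrary: f g)
  case 0
  then show ?case by simp
next
  case (Suc m)
  have "deriv (\<lambda>x. a * f x + b * g x) = (\<lambda>x. a * deriv f x + b * deriv g x)"
    using Suc.prems
    by (intro ext DERIV_imp_deriv derivative_eq_intros) (auto intro: smooth_has_derivative)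
  then show ?case
    using Suc.IH[of "deriv f" "deriv g"] Suc.prems
    by (simp only: funpow_Suc_right comp_apply smooth_deriv)
qed

lemma smooth_linear: "smooth f \<Longrightarrow> smooth g \<Longrightarrow> smooth (\<lambda>x. a * f x + b * g x)"
  by (simp add: smooth_def higher_deriv_linear)

lemma smooth_sum:
  fixes l :: nat
  assumes "\<And>j. j \<le> l \<Longrightarrow> smooth (f j)"
  shows "smooth (\<lambda>x. \<Sum>j\<le>l. f j x)"
  using assms by (induction l) (use smooth_linear[where a = 1 and b = 1] in auto)

lemma deriv_periodic:
  assumes "\<And>x. f (x + p) = f x"
  shows "deriv f (x + p) = deriv f x"
proof -
  have "(f has_field_derivative D) (at (x + p)) \<longleftrightarrow> (f has_field_derivative D) (at x)" for D
    using DERIV_shift[of f D x p] assms by simp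
  then show ?thesis
    unfolding deriv_def by simp
qed

lemma integral_deriv:
  fixes f :: "real \<Rightarrow> real"
  assumes "a \<le> b" "\<And>x. f differentiable (at x)"
  shows "integral {a..b} (deriv f) = f b - f a"
proof (rule integral_unique, rule fundamental_theorem_of_calculus[OF assms(1)])
  show "(f has_vector_derivative deriv f x) (at x within {a..b})" for x
    using assms(2) by (metis DERIV_deriv_iff_real_differentiable has_field_derivative_at_within
        has_real_derivative_iff_has_vector_derivative)
qed

lemma deriv_poly: "deriv (poly p) = poly (pderiv p)"
  by (intro ext DERIV_imp_deriv poly_DERIV)

lemma summation_by_parts:
  fixes f g :: "nat \<Rightarrow> 'a::comm_ring"
  shows "(\<Sum>j\<le>k. f j * (g (Suc j) - g j))
    = f k * g (Suc k) - f 0 * g 0 - (\<Sum>j<k. (f (Suc j) - f j) * g (Suc j))"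
  by (induction k) (simp_all add: algebra_simps)

lemma sum_lessThan_Suc_mod:
  fixes F :: "nat \<Rightarrow> 'a::comm_monoid_add"
  assumes "0 < N"
  shows "(\<Sum>i<N. F (Suc i mod N)) = (\<Sum>i<N. F i)"
proof -
  obtain M where N: "N = Suc M" using assms by (cases N) auto
  have "(\<Sum>i<Suc M. F (Suc i mod Suc M)) = (\<Sum>i<M. F (Suc i)) + F 0"
    by (simp add: sum.lessThan_Suc)
  also have "\<dots> = (\<Sum>i<Suc M. F i)"
    by (simp only: sum.lessThan_Suc_shift add.commute)
  finally show ?thesis using N by simp
qed

lemma periodic_index_Suc_mod:
  assumes "f N = f 0" "i < N"
  shows "f (Suc i mod N) = f (Suc i)"
  using assms by (cases "Suc i = N") auto

lemma periodic_index_pred_mod: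
  assumes "f N = f 0" "i < N"
  shows "f (Suc ((i + N - 1) mod N)) = f i"
proof (cases i)
  case 0
  then show ?thesis using assms by simp
next
  case (Suc j)
  then have "(i + N - 1) mod N = j"
    using assms(2) by simp
  then show ?thesis using Suc by simp
qed

lemma ipStar_cmult: "ipStar N k xs (\<lambda>x. a * f x) w = a * ipStar N k xs f w"
  unfolding ipStar_def by (simp add: sum_distrib_left mult.assoc)

lemma continuous_times_const_integrable:
  fixes h :: "real \<Rightarrow> real"
  assumes "continuous_on UNIV h"
  shows "(\<lambda>x. h x * r) integrable_on {y..z}"
  using assms by (auto intro!: integrable_continuous_interval continuous_intros
      intro: continuous_on_subset)

lemma ipStar_diff:
  assumes "continuous_on UNIV f" "continuous_on UNIV g"
  shows "ipStar N k xs (\<lambda>x. f x - g x) w = ipStar N k xs f w - ipStar N k xs g w"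
  using assms unfolding ipStar_def
  by (simp add: left_diff_distrib integral_diff sum_subtractf continuous_times_const_integrable)

lemma ipStar_sum:
  assumes "finite I" "\<And>j. j \<in> I \<Longrightarrow> continuous_on UNIV (f j)"
  shows "ipStar N k xs (\<lambda>x. \<Sum>j\<in>I. f j x) w = (\<Sum>j\<in>I. ipStar N k xs (f j) w)"
  using assms unfolding ipStar_def
  by (simp add: sum_distrib_right integral_sum continuous_times_const_integrable
      sum.swap[where A = I])

lemma integral_deriv_times_Mstar_cell:
  fixes v :: "real \<Rightarrow> real"
  assumes sub0: "xs i 0 = xb i" and subend: "xs i (Suc k) = xb (Suc i)"
    and sub_mono: "\<And>j. j \<le> k \<Longrightarrow> xs i j < xs i (Suc j)"
    and cell_mono: "xb i \<le> xb (Suc i)"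
    and v_diff: "\<And>x. v differentiable (at x)"
    and exact: "integral {xb i..xb (Suc i)} (poly (pderiv (\<omega> i)))
                  = quadQ k xs A i (poly (pderiv (\<omega> i)))"
  shows "(\<Sum>j\<le>k. integral {xs i j..xs i (Suc j)} (\<lambda>x. deriv v x * Mstar xb xs A \<omega> i j))
    = poly (\<omega> i) (xb (Suc i)) * v (xb (Suc i)) - poly (\<omega> i) (xb i) * v (xb i)
      - quadQ k xs A i (\<lambda>x. v x * poly (pderiv (\<omega> i)) x)"
proof -
  define M where "M = Mstar xb xs A \<omega> i"
  define D where "D j = A i j * poly (pderiv (\<omega> i)) (xs i j)" for j
  define V where "V j = v (xs i j)" for j
  have M_Suc: "M (Suc j) - M j = D (Suc j)" for j
    by (simp add: M_def D_def)
  have split_ends: "(\<Sum>j\<le>Suc k. g j) = g 0 + (\<Sum>j<k. g (Suc j)) + g (Suc k)"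
    for g :: "nat \<Rightarrow> real"
    by (subst sum.atMost_Suc_shift) (simp flip: lessThan_Suc_atMost)
  have "poly (\<omega> i) differentiable (at x)" for x
    using poly_DERIV real_differentiable_def by blast
  from integral_deriv[OF cell_mono this]
  have "poly (\<omega> i) (xb (Suc i)) - poly (\<omega> i) (xb i) = (\<Sum>j\<le>Suc k. D j)"
    using exact by (simp add: deriv_poly quadQ_def D_def)
  then have poly_ends:
      "poly (\<omega> i) (xb (Suc i)) - poly (\<omega> i) (xb i) = D 0 + (\<Sum>j<k. D (Suc j)) + D (Suc k)"
    by (simp only: split_ends)
  have quad: "quadQ k xs A i (\<lambda>x. v x * poly (pderiv (\<omega> i)) x)
      = D 0 * V 0 + (\<Sum>j<k. D (Suc j) * V (Suc j)) + D (Suc k) * V (Suc k)"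
    unfolding quadQ_def split_ends by (simp add: D_def V_def mult_ac)
  have M_k: "M k = M 0 + (\<Sum>j<k. D (Suc j))"
    using sum_lessThan_telescope[of M k] by (simp add: M_Suc)
  have M_0: "M 0 = poly (\<omega> i) (xb i) + D 0"
    by (simp add: M_def D_def sub0)
  have "(\<Sum>j\<le>k. integral {xs i j..xs i (Suc j)} (\<lambda>x. deriv v x * M j))
      = (\<Sum>j\<le>k. M j * (V (Suc j) - V j))"
    using integral_deriv[OF less_imp_le[OF sub_mono] v_diff] by (simp add: V_def mult.commute)
  also have "\<dots> = M k * V (Suc k) - M 0 * V 0 - (\<Sum>j<k. D (Suc j) * V (Suc j))"
    by (simp add: summation_by_parts M_Suc)
  finally show ?thesis
    unfolding M_def[symmetric] quad using poly_ends M_k M_0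
    by (simp add: V_def sub0 subend algebra_simps)
qed

lemma Hstar_eq_minus_ipStar_deriv:
  fixes v :: "real \<Rightarrow> real"
  assumes N_pos: "0 < N"
    and mesh_mono: "\<And>i. i < N \<Longrightarrow> xb i < xb (Suc i)"
    and sub0: "\<And>i. i < N \<Longrightarrow> xs i 0 = xb i"
    and subend: "\<And>i. i < N \<Longrightarrow> xs i (Suc k) = xb (Suc i)"
    and sub_mono: "\<And>i j. i < N \<Longrightarrow> j \<le> k \<Longrightarrow> xs i j < xs i (Suc j)"
    and exact: "\<And>i p. i < N \<Longrightarrow> degree p \<le> k - 1 \<Longrightarrow>
                  integral {xb i..xb (Suc i)} (poly p) = quadQ k xs A i (poly p)"
    and deg: "\<And>i. i < N \<Longrightarrow> degree (\<omega> i) \<le> k"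
    and v_diff: "\<And>x. v differentiable (at x)"
    and v_periodic: "v (xb N) = v (xb 0)"
  shows "Hstar \<beta> N k xb xs A v \<omega> = - \<beta> * ipStar N k xs (deriv v) (Mstar xb xs A \<omega>)"
proof -
  define L where "L i = v (xb i) * poly (\<omega> i) (xb i)" for i
  define R where "R i = v (xb (Suc i)) * poly (\<omega> i) (xb (Suc i))" for i
  define Q where "Q i = quadQ k xs A i (\<lambda>x. v x * poly (pderiv (\<omega> i)) x)" for i
  have cells: "ipStar N k xs (deriv v) (Mstar xb xs A \<omega>) = (\<Sum>i<N. R i - L i - Q i)"
    unfolding ipStar_def
  proof (rule sum.cong)
    fix i assume "i \<in> {..<N}"
    then have i: "i < N" by simp
    have "degree (pderiv (\<omega> i)) \<le> k - 1"
      using deg[OF i] by (simp add: degree_pderiv diff_le_mono)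
    from integral_deriv_times_Mstar_cell[where v = v and \<omega> = \<omega> and A = A and k = k,
        OF sub0[OF i] subend[OF i] sub_mono[OF i] less_imp_le[OF mesh_mono[OF i]] v_diff
        exact[OF i this]]
    show "(\<Sum>j\<le>k. integral {xs i j..xs i (Suc j)} (\<lambda>x. deriv v x * Mstar xb xs A \<omega> i j))
        = R i - L i - Q i"
      by (simp add: L_def R_def Q_def mult.commute)
  qed simp
  have no_jumps: "(\<Sum>i<N. A i 0 * poly (pderiv (\<omega> i)) (xb i)
      * (v (xb i) - v (xb (Suc ((i + N - 1) mod N))))) = 0"
    using periodic_index_pred_mod[of "\<lambda>i. v (xb i)", OF v_periodic] by simp
  have "(\<Sum>i<N. v (xb (Suc i)) * poly (\<omega> (Suc i mod N)) (xb (Suc i mod N)))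
      = (\<Sum>i<N. L (Suc i mod N))"
    using periodic_index_Suc_mod[of "\<lambda>i. v (xb i)", OF v_periodic] by (simp add: L_def)
  also have "\<dots> = (\<Sum>i<N. L i)"
    by (rule sum_lessThan_Suc_mod[OF N_pos])
  finally have fluxes: "(\<Sum>i<N. v (xb (Suc i))
      * (poly (\<omega> (Suc i mod N)) (xb (Suc i mod N)) - poly (\<omega> i) (xb (Suc i))))
      = (\<Sum>i<N. L i - R i)"
    by (simp add: R_def right_diff_distrib sum_subtractf)
  show ?thesis
    unfolding Hstar_def cells no_jumps fluxes
    by (simp add: Q_def sum_subtractf sum.distrib algebra_simps)
qed

definition stage_combination ::
    "(nat \<Rightarrow> nat \<Rightarrow> real) \<Rightarrow> (nat \<Rightarrow> nat \<Rightarrow> real) \<Rightarrow> real \<Rightarrow> real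
     \<Rightarrow> (nat \<Rightarrow> real \<Rightarrow> real) \<Rightarrow> nat \<Rightarrow> real \<Rightarrow> real" where
  "stage_combination c d \<beta> \<tau> V l x = (\<Sum>\<kappa>\<le>l. c l \<kappa> * V \<kappa> x - \<tau> * d l \<kappa> * \<beta> * deriv (V \<kappa>) x)"

lemma smooth_stage_combination:
  assumes "\<And>\<kappa>. \<kappa> \<le> l \<Longrightarrow> smooth (V \<kappa>)"
  shows "smooth (stage_combination c d \<beta> \<tau> V l)"
proof -
  have "smooth (\<lambda>x. c l \<kappa> * V \<kappa> x + (- \<tau> * d l \<kappa> * \<beta>) * deriv (V \<kappa>) x)"
    if "\<kappa> \<le> l" for \<kappa>
    using assms[OF that] by (intro smooth_linear smooth_deriv)
  then show ?thesis
    unfolding stage_combination_def[abs_def] by (intro smooth_sum) simp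
qed

lemma stage_combination_periodic:
  assumes "\<And>\<kappa> x. \<kappa> \<le> l \<Longrightarrow> V \<kappa> (x + p) = V \<kappa> x"
  shows "stage_combination c d \<beta> \<tau> V l (x + p) = stage_combination c d \<beta> \<tau> V l x"
  unfolding stage_combination_def using assms deriv_periodic[of "V _" p] by simp

lemma Uref_Suc:
  "Uref c d \<beta> \<tau> s U n (Suc l) =
     (if Suc l = s then (\<lambda>x. U x (real (Suc n) * \<tau>))
      else stage_combination c d \<beta> \<tau> (Uref c d \<beta> \<tau> s U n) l)"
  by (simp add: stage_combination_def[abs_def])

lemma rho_Suc:
  "rho c d \<beta> \<tau> s U n (Suc l) =
     (\<lambda>x. 1 / \<tau> * (Uref c d \<beta> \<tau> s U n (Suc l) x
                       - stage_combination c d \<beta> \<tau> (Uref c d \<beta> \<tau> s U n) l x))"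
  by (auto simp: stage_combination_def)

lemma Uref_smooth:
  assumes "\<And>t. smooth (\<lambda>x. U x t)"
  shows "smooth (Uref c d \<beta> \<tau> s U n q)"
proof (induction q rule: less_induct)
  case (less q)
  then show ?case
    by (cases q) (auto simp: Uref_Suc assms simp del: Uref.simps(2) intro: smooth_stage_combination)
qed

lemma Uref_periodic:
  assumes "\<And>x t. U (x + p) t = U x t"
  shows "Uref c d \<beta> \<tau> s U n q (x + p) = Uref c d \<beta> \<tau> s U n q x"
proof (induction q arbitrary: x rule: less_induct)
  case (less q)
  then show ?case
    by (cases q) (auto simp: Uref_Suc assms simp del: Uref.simps(2) intro: stage_combination_periodic)
qed

lemma ipStar_stage_combination:
  assumes "\<And>\<kappa>. \<kappa> \<le> l \<Longrightarrow> smooth (V \<kappa>)"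
  shows "ipStar N k xs (stage_combination c d \<beta> \<tau> V l) w
    = (\<Sum>\<kappa>\<le>l. c l \<kappa> * ipStar N k xs (V \<kappa>) w - \<tau> * d l \<kappa> * \<beta> * ipStar N k xs (deriv (V \<kappa>)) w)"
proof -
  have cont: "continuous_on UNIV (V \<kappa>)" "continuous_on UNIV (deriv (V \<kappa>))"
    if "\<kappa> \<le> l" for \<kappa>
    using assms[OF that] by (auto intro: smooth_continuous_on smooth_deriv)
  have "ipStar N k xs (\<lambda>x. c l \<kappa> * V \<kappa> x - \<tau> * d l \<kappa> * \<beta> * deriv (V \<kappa>) x) w
      = c l \<kappa> * ipStar N k xs (V \<kappa>) w - \<tau> * d l \<kappa> * \<beta> * ipStar N k xs (deriv (V \<kappa>)) w"
    if "\<kappa> \<le> l" for \<kappa>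
    using cont[OF that] by (simp add: ipStar_diff ipStar_cmult continuous_intros)
  then show ?thesis
    unfolding stage_combination_def[abs_def]
    by (subst ipStar_sum) (auto intro!: continuous_intros cont sum.cong)
qed

theorem proposition4p16:
  fixes a b \<beta> \<tau> :: real and N k s n :: nat
    and xb :: "nat \<Rightarrow> real" and xs A :: "nat \<Rightarrow> nat \<Rightarrow> real"
    and c d :: "nat \<Rightarrow> nat \<Rightarrow> real"
    and U :: "real \<Rightarrow> real \<Rightarrow> real"
  assumes N_pos: "N \<ge> 1"
    and mesh0: "xb 0 = a" and meshN: "xb N = b"
    and mesh_mono: "\<And>i. i < N \<Longrightarrow> xb i < xb (Suc i)"
    and sub0: "\<And>i. i < N \<Longrightarrow> xs i 0 = xb i"
    and subend: "\<And>i. i < N \<Longrightarrow> xs i (Suc k) = xb (Suc i)"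
    and sub_mono: "\<And>i j. i < N \<Longrightarrow> j \<le> k \<Longrightarrow> xs i j < xs i (Suc j)"
    and exact: "\<And>i p. i < N \<Longrightarrow> degree p \<le> k - 1 \<Longrightarrow>
                  integral {xb i..xb (Suc i)} (poly p) = quadQ k xs A i (poly p)"
    and S: "assumptionS N k xb xs A"
    and beta_pos: "\<beta> > 0" and tau_pos: "\<tau> > 0" and s_pos: "s \<ge> 1"
    and c_sum: "\<And>l. l \<le> s - 1 \<Longrightarrow> (\<Sum>\<kappa>\<le>l. c l \<kappa>) = 1"
    and U_smooth: "\<And>t m x. (deriv ^^ m) (\<lambda>y. U y t) differentiable (at x)"
    and U_pde: "\<And>x t. ((\<lambda>t'. U x t') has_real_derivative (- \<beta> * deriv (\<lambda>y. U y t) x)) (at t)"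
    and U_periodic: "\<And>x t. U (x + (b - a)) t = U x t"
  shows "\<forall>\<omega> :: nat \<Rightarrow> real poly. (\<forall>i<N. degree (\<omega> i) \<le> k) \<longrightarrow>
           (\<forall>l<s. ipStar N k xs (Uref c d \<beta> \<tau> s U n (Suc l)) (Mstar xb xs A \<omega>)
              = (\<Sum>\<kappa>\<le>l. c l \<kappa> * ipStar N k xs (Uref c d \<beta> \<tau> s U n \<kappa>) (Mstar xb xs A \<omega>)
                        + \<tau> * d l \<kappa> * Hstar \<beta> N k xb xs A (Uref c d \<beta> \<tau> s U n \<kappa>) \<omega>)
                + \<tau> * ipStar N k xs (rho c d \<beta> \<tau> s U n (Suc l)) (Mstar xb xs A \<omega>))"
proof (intro allI impI)
  fix \<omega> :: "nat \<Rightarrow> real poly" and l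
  assume deg: "\<forall>i<N. degree (\<omega> i) \<le> k"
  let ?V = "Uref c d \<beta> \<tau> s U n" and ?W = "Mstar xb xs A \<omega>"
  have smooth: "smooth (?V q)" for q
    using U_smooth by (intro Uref_smooth) (simp add: smooth_def)
  have "?V q b = ?V q a" for q
    using Uref_periodic[where U = U and p = "b - a" and x = a, OF U_periodic] by simp
  then have H: "Hstar \<beta> N k xb xs A (?V q) \<omega> = - \<beta> * ipStar N k xs (deriv (?V q)) ?W" for q
    using N_pos deg mesh0 meshN smooth_differentiable[OF smooth]
    by (intro Hstar_eq_minus_ipStar_deriv[OF _ mesh_mono sub0 subend sub_mono exact]) auto
  have "\<tau> * ipStar N k xs (rho c d \<beta> \<tau> s U n (Suc l)) ?W
      = ipStar N k xs (?V (Suc l)) ?W - ipStar N k xs (stage_combination c d \<beta> \<tau> ?V l) ?W"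
    unfolding rho_Suc ipStar_cmult
    using tau_pos smooth_continuous_on[OF smooth]
      smooth_continuous_on[OF smooth_stage_combination[OF smooth]]
    by (simp add: ipStar_diff del: Uref.simps)
  moreover have "ipStar N k xs (stage_combination c d \<beta> \<tau> ?V l) ?W
      = (\<Sum>\<kappa>\<le>l. c l \<kappa> * ipStar N k xs (?V \<kappa>) ?W + \<tau> * d l \<kappa> * Hstar \<beta> N k xb xs A (?V \<kappa>) \<omega>)"
    by (simp add: ipStar_stage_combination[OF smooth] H mult.assoc)
  ultimately show "ipStar N k xs (?V (Suc l)) ?W
      = (\<Sum>\<kappa>\<le>l. c l \<kappa> * ipStar N k xs (?V \<kappa>) ?W + \<tau> * d l \<kappa> * Hstar \<beta> N k xb xs A (?V \<kappa>) \<omega>)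
        + \<tau> * ipStar N k xs (rho c d \<beta> \<tau> s U n (Suc l)) ?W"
    by linarith
qed

end
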